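(* The shuffle algebra $K[S_\infty]=\bigoplus_{n\ge1}K[S_n]$, with $\sigma\bullet_\gamma\tau=(\sigma\times\tau)\cdot\gamma$ for $\sigma\in S_n$, $\tau\in S_m$, $\gamma\in Sh(n,m)$, equipped with the coproduct $\Delta_{MR}(\sigma)=\sum_{r=1}^{n-1}\mathrm{std}(\sigma(1),\dots,\sigma(r))\otimes\mathrm{std}(\sigma(r+1),\dots,\sigma(n))$ for $\sigma\in S_n$, is a shuffle bialgebra.
   Context: Permutations $\sigma\in S_n$ are written as words $(\sigma(1),\dots,\sigma(n))$; $1_n$ is the identity, and $\sigma\cdot\tau$ denotes composition, $(\sigma\cdot\tau)(i)=\sigma(\tau(i))$. For $\sigma\in S_n$, $\tau\in S_m$, $\sigma\times\tau\in S_{n+m}$ is $(\sigma(1),\dots,\sigma(n),\tau(1)+n,\dots,\tau(m)+n)$. For nonnegative integers $n_1,\dots,n_r$ with sum $n$, $Sh(n_1,\dots,n_r)$ is the set of $\sigma\in S_n$ such that $\sigma^{-1}(n_1+\dots+n_{k-1}+1)<\dots<\sigma^{-1}(n_1+\dots+n_k)$ for every $k$. For $n,m\ge0$, $\epsilon_{n,m}=(n+1,\dots,n+m,1,\dots,n)\in Sh(n,m)$. For a word of distinct integers, $\mathrm{std}$ denotes its standardization: the permutation obtained by replacing its $j$-th smallest letter by $j$. An element of $S_n$ has degree $n$. A shuffle algebra is a graded vector space $A=\bigoplus_{n\ge0}A_n$ over a field $K$ with linear maps $\bullet_\gamma:A_n\otimes A_m\to A_{n+m}$ for all $n,m\ge0$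 and $\gamma\in Sh(n,m)$, such that for $x\in A_n$, $y\in A_m$, $z\in A_r$ one has $x\bullet_\gamma(y\bullet_\delta z)=(x\bullet_\sigma y)\bullet_\lambda z$ whenever $\gamma\in Sh(n,m+r)$, $\delta\in Sh(m,r)$, $\sigma\in Sh(n,m)$, $\lambda\in Sh(n+m,r)$ satisfy $(1_n\times\delta)\cdot\gamma=(\sigma\times1_r)\cdot\lambda$. Decomposition of shuffles: for $\gamma\in Sh(n,m)$ and $0\le r\le n+m$, put $n_1=|\gamma^{-1}(\{1,\dots,n\})\cap\{1,\dots,r\}|$ and $m_1=r-n_1$; there are unique $\gamma^r_{(1)}\in Sh(n_1,m_1)$ and $\gamma^{n+m-r}_{(2)}\in Sh(n-n_1,m-m_1)$ with $\gamma=(1_{n_1}\times\epsilon_{n-n_1,m_1}\times1_{m-m_1})\cdot(\gamma^r_{(1)}\times\gamma^{n+m-r}_{(2)})$. A shuffle bialgebra is a shuffle algebra $A$ with $A_0=0$ together with a coassociative coproduct $\Delta:A\to A\otimes A$ with $\Delta(A_n)\subseteq\bigoplus_{i=1}^{n-1}A_i\otimes A_{n-i}$, such that for $x\in A_n$, $y\in A_m$, $\gamma\in Sh(n,m)$: $\Delta(x\bullet_\gamma y)=\sum_{r=1}^{n+m-1}\sum(x_{(1)}\bullet_{\gamma^r_{(1)}}y_{(1)})\otimes(x_{(2)}\bullet_{\gamma^{n+m-r}_{(2)}}y_{(2)})$, where, with $\Delta_+(z)=z\otimes1+1\otimes z+\Delta(z)$ on $K1\oplus A$ ($1$ of degree $0$),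 the inner sum is over the homogeneous components $x_{(1)}\otimes x_{(2)}$ of $\Delta_+(x)$ with $|x_{(1)}|=n_1$ and $y_{(1)}\otimes y_{(2)}$ of $\Delta_+(y)$ with $|y_{(1)}|=m_1$, using the conventions $1\bullet_\tau z=z\bullet_\tau1=z$. *)

theory Defs
  imports Main "HOL-Library.Poly_Mapping"
begin

text \<open>Permutations in S_n are represented as words (lists) (sigma(1),...,sigma(n)),
  so sigma(i) = w ! (i-1). The empty word is the unique element of S_0 (the unit 1).
  Elements of K[S_infinity] and of its tensor powers are finitely supported
  K-valued functions on words / pairs / triples of words (the basis coefficients).\<close>

type_synonym word = "nat list"

definition is_perm :: "nat \<Rightarrow> word \<Rightarrow> bool" where
  "is_perm n w \<longleftrightarrow> length w = n \<and> set w = {1..n}"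

definition idp :: "nat \<Rightarrow> word" where
  "idp n = [1..<Suc n]"

definition compw :: "word \<Rightarrow> word \<Rightarrow> word" where
  "compw s t = map (\<lambda>j. s ! (j - 1)) t"

definition crossw :: "word \<Rightarrow> word \<Rightarrow> word" where
  "crossw s t = s @ map (\<lambda>j. j + length s) t"

text \<open>inverse permutation: pinv w ! (k-1) = w^{-1}(k)\<close>
definition pinv :: "word \<Rightarrow> word" where
  "pinv w = map (\<lambda>k. Suc (LEAST i. i < length w \<and> w ! i = k)) [1..<Suc (length w)]"

definition Sh2 :: "nat \<Rightarrow> nat \<Rightarrow> word set" where
  "Sh2 n m = {w. is_perm (n + m) w
      \<and> (\<forall>k. 1 \<le> k \<and> k < n \<longrightarrow> pinv w ! (k - 1) < pinv w ! k)
      \<and> (\<forall>k. n + 1 \<le> k \<and> k < n + m \<longrightarrow> pinv w ! (k - 1) < pinv w ! k)}"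

definition eps :: "nat \<Rightarrow> nat \<Rightarrow> word" where
  "eps n m = [Suc n..<Suc (n + m)] @ [1..<Suc n]"

text \<open>standardization: the j-th smallest letter x has exactly j letters \<le> x\<close>
definition stdw :: "word \<Rightarrow> word" where
  "stdw w = map (\<lambda>x. card {y \<in> set w. y \<le> x}) w"

text \<open>homogeneous component A_n of K[S_infinity] (A_0 = 0)\<close>
definition inA :: "nat \<Rightarrow> (word \<Rightarrow>\<^sub>0 'k::zero) \<Rightarrow> bool" where
  "inA n x \<longleftrightarrow> (\<forall>w\<in>Poly_Mapping.keys x. 1 \<le> n \<and> is_perm n w)"

definition inAll :: "(word \<Rightarrow>\<^sub>0 'k::zero) \<Rightarrow> bool" where
  "inAll x \<longleftrightarrow> (\<forall>w\<in>Poly_Mapping.keys x. 1 \<le> length w \<and> is_perm (length w) w)"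

definition shprod :: "word \<Rightarrow> (word \<Rightarrow>\<^sub>0 'k::field) \<Rightarrow> (word \<Rightarrow>\<^sub>0 'k) \<Rightarrow> (word \<Rightarrow>\<^sub>0 'k)" where
  "shprod g x y = (\<Sum>s\<in>Poly_Mapping.keys x. \<Sum>t\<in>Poly_Mapping.keys y.
      Poly_Mapping.single (compw (crossw s t) g) (Poly_Mapping.lookup x s * Poly_Mapping.lookup y t))"

definition DeltaMR :: "(word \<Rightarrow>\<^sub>0 'k::field) \<Rightarrow> (word \<times> word \<Rightarrow>\<^sub>0 'k)" where
  "DeltaMR x = (\<Sum>s\<in>Poly_Mapping.keys x. \<Sum>r\<in>{1..<length s}.
      Poly_Mapping.single (stdw (take r s), stdw (drop r s)) (Poly_Mapping.lookup x s))"

definition Delta_id :: "(word \<times> word \<Rightarrow>\<^sub>0 'k::field) \<Rightarrow> (word \<times> word \<times> word \<Rightarrow>\<^sub>0 'k)" where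
  "Delta_id t = (\<Sum>(u,v)\<in>Poly_Mapping.keys t. \<Sum>(a,b)\<in>Poly_Mapping.keys (DeltaMR (Poly_Mapping.single u (1::'k))).
      Poly_Mapping.single (a, b, v) (Poly_Mapping.lookup t (u,v) * Poly_Mapping.lookup (DeltaMR (Poly_Mapping.single u (1::'k))) (a,b)))"

definition id_Delta :: "(word \<times> word \<Rightarrow>\<^sub>0 'k::field) \<Rightarrow> (word \<times> word \<times> word \<Rightarrow>\<^sub>0 'k)" where
  "id_Delta t = (\<Sum>(u,v)\<in>Poly_Mapping.keys t. \<Sum>(a,b)\<in>Poly_Mapping.keys (DeltaMR (Poly_Mapping.single v (1::'k))).
      Poly_Mapping.single (u, a, b) (Poly_Mapping.lookup t (u,v) * Poly_Mapping.lookup (DeltaMR (Poly_Mapping.single v (1::'k))) (a,b)))"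

text \<open>Delta_+(z) = z \<otimes> 1 + 1 \<otimes> z + Delta(z), the unit 1 being the empty word\<close>
definition Delta_plus :: "(word \<Rightarrow>\<^sub>0 'k::field) \<Rightarrow> (word \<times> word \<Rightarrow>\<^sub>0 'k)" where
  "Delta_plus x = (\<Sum>s\<in>Poly_Mapping.keys x. Poly_Mapping.single (s, []) (Poly_Mapping.lookup x s)
      + Poly_Mapping.single ([], s) (Poly_Mapping.lookup x s)) + DeltaMR x"

definition n1_of :: "word \<Rightarrow> nat \<Rightarrow> nat \<Rightarrow> nat" where
  "n1_of g n r = card {i \<in> {1..r}. g ! (i - 1) \<in> {1..n}}"

definition dec :: "word \<Rightarrow> nat \<Rightarrow> nat \<Rightarrow> nat \<Rightarrow> word \<times> word" where
  "dec g n m r = (let n1 = n1_of g n r; m1 = r - n1 in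
     THE (a, b). a \<in> Sh2 n1 m1 \<and> b \<in> Sh2 (n - n1) (m - m1) \<and>
       g = compw (crossw (crossw (idp n1) (eps (n - n1) m1)) (idp (m - m1))) (crossw a b))"

definition shE :: "word \<Rightarrow> word \<Rightarrow> word \<Rightarrow> word" where
  "shE g s t = (if s = [] then t else if t = [] then s else compw (crossw s t) g)"

text \<open>right-hand side of the compatibility condition, expanded bilinearly
  over the homogeneous components of Delta_+(x) and Delta_+(y)\<close>
definition compat_rhs :: "word \<Rightarrow> nat \<Rightarrow> nat \<Rightarrow> (word \<Rightarrow>\<^sub>0 'k::field) \<Rightarrow> (word \<Rightarrow>\<^sub>0 'k)
    \<Rightarrow> (word \<times> word \<Rightarrow>\<^sub>0 'k)" where
  "compat_rhs g n m x y = (\<Sum>r\<in>{1..<n + m}.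
     let n1 = n1_of g n r; m1 = r - n1; g1 = fst (dec g n m r); g2 = snd (dec g n m r) in
     (\<Sum>(a,b)\<in>{p \<in> Poly_Mapping.keys (Delta_plus x). length (fst p) = n1}.
      \<Sum>(c,d)\<in>{p \<in> Poly_Mapping.keys (Delta_plus y). length (fst p) = m1}.
        Poly_Mapping.single (shE g1 a c, shE g2 b d)
          (Poly_Mapping.lookup (Delta_plus x) (a,b) * Poly_Mapping.lookup (Delta_plus y) (c,d))))"

end

theory Submission
  imports Defs "HOL.Modules"
begin

(* Both bialgebra axioms come down to identities between permutation words.
  Standardization only sees the relative order of the letters, so a prefix or suffix of std u
  standardizes to the same word as the corresponding prefix or suffix of u; this gives the
  coassociativity of Delta_MR.
  For the compatibility, cut the word (s \<times> t) \<cdot> \<gamma> after its first r letters. Since \<gamma> is a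
  shuffle, these letters come from the first n1 letters of s and the first m1 letters of t, and the
  standardized prefix is (std (s(1)...s(n1)) \<times> std (t(1)...t(m1))) \<cdot> std (\<gamma>(1)...\<gamma>(r));
  similarly for the suffix. Moreover the standardized prefix and suffix of \<gamma> are exactly the two
  shuffles of the decomposition of \<gamma> at r. *)

(* keep the intervals [i..<Suc j] intact instead of splitting off their last element *)
declare upt_Suc [simp del]

lemma is_perm_length: "is_perm n w \<Longrightarrow> length w = n"
  by (simp add: is_perm_def)

lemma is_perm_distinct: "is_perm n w \<Longrightarrow> distinct w"
  unfolding is_perm_def by (metis card_atLeastAtMost card_distinct diff_Suc_1)

lemma is_perm_nth: "is_perm n w \<Longrightarrow> i < n \<Longrightarrow> 1 \<le> w ! i \<and> w ! i \<le> n"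
  unfolding is_perm_def by (metis atLeastAtMost_iff nth_mem)

lemma is_perm_intro:
  assumes "length w = n" "distinct w" "set w \<subseteq> {1..n}"
  shows "is_perm n w"
  using assms card_subset_eq[of "{1..n}" "set w"] by (simp add: is_perm_def distinct_card)

lemma compw_length [simp]: "length (compw s t) = length t"
  by (simp add: compw_def)

lemma compw_nth: "i < length t \<Longrightarrow> compw s t ! i = s ! (t ! i - 1)"
  by (simp add: compw_def)

lemma crossw_length [simp]: "length (crossw s t) = length s + length t"
  by (simp add: crossw_def)

lemma crossw_Nil [simp]: "crossw [] t = t" "crossw s [] = s"
  by (simp_all add: crossw_def)

lemma idp_length [simp]: "length (idp n) = n"
  by (simp add: idp_def)

lemma is_perm_idp: "is_perm n (idp n)"
  by (simp add: is_perm_def idp_def atLeastLessThanSuc_atLeastAtMost)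

lemma is_perm_eps: "is_perm (n + m) (eps n m)"
  by (auto simp: is_perm_def eps_def)

lemma is_perm_compw:
  assumes "is_perm n s" "is_perm n t"
  shows "is_perm n (compw s t)"
proof -
  have "set (compw s t) = (\<lambda>j. s ! (j - 1)) ` Suc ` {..<n}"
    using assms(2) by (simp add: compw_def is_perm_def image_Suc_lessThan)
  also have "\<dots> = (!) s ` {..<length s}"
    using assms(1) by (simp add: image_image is_perm_length)
  also have "\<dots> = set s"
    by (auto simp: in_set_conv_nth)
  finally show ?thesis
    using assms by (simp add: is_perm_def compw_def)
qed

lemma is_perm_crossw: "is_perm n s \<Longrightarrow> is_perm m t \<Longrightarrow> is_perm (n + m) (crossw s t)"
  unfolding is_perm_def crossw_def
  by (auto simp: image_add_atLeastAtMost[symmetric] add.commute)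

lemma compw_idp_right: "length s = n \<Longrightarrow> compw s (idp n) = s"
  by (rule nth_equalityI) (simp_all add: compw_nth idp_def)

lemma compw_assoc: "set u \<subseteq> {1..length t} \<Longrightarrow> compw (compw s t) u = compw s (compw t u)"
  by (fastforce simp: compw_def)

lemma crossw_assoc: "crossw (crossw s t) u = crossw s (crossw t u)"
  by (simp add: crossw_def add.assoc)

lemma crossw_compw:
  assumes "length s = length t" "set t \<subseteq> {1..length s}" "set v \<subseteq> {1..length u}"
  shows "crossw (compw s t) (compw u v) = compw (crossw s u) (crossw t v)"
  using assms unfolding crossw_def compw_def
  by (auto simp: subset_iff nth_append intro!: map_cong)

lemma compw_cancel:
  assumes "is_perm n p" "set u \<subseteq> {1..n}" "set v \<subseteq> {1..n}" "compw p u = compw p v"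
  shows "u = v"
proof -
  have "inj_on (\<lambda>j. p ! (j - 1)) {1..n}"
    using is_perm_distinct[OF assms(1)] is_perm_length[OF assms(1)]
    by (auto simp: inj_on_def nth_eq_iff_index_eq)
  then show ?thesis
    using assms(2-4) unfolding compw_def by (meson inj_on_map_eq_map inj_on_subset le_sup_iff)
qed

lemma crossw_cancel: "crossw s t = crossw s' t' \<Longrightarrow> length s = length s' \<Longrightarrow> s = s' \<and> t = t'"
  by (auto simp: crossw_def inj_def dest: map_injective)

definition order_isomorphic :: "word \<Rightarrow> word \<Rightarrow> bool" where
  "order_isomorphic u v \<longleftrightarrow> length u = length v \<and>
     (\<forall>i<length u. \<forall>j<length u. u ! i < u ! j \<longleftrightarrow> v ! i < v ! j)"

lemma order_isomorphic_sym: "order_isomorphic u v \<Longrightarrow> order_isomorphic v u"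
  by (simp add: order_isomorphic_def)

lemma order_isomorphic_take: "order_isomorphic u v \<Longrightarrow> order_isomorphic (take k u) (take k v)"
  by (simp add: order_isomorphic_def)

lemma order_isomorphic_drop: "order_isomorphic u v \<Longrightarrow> order_isomorphic (drop k u) (drop k v)"
  by (simp add: order_isomorphic_def)

lemma order_isomorphic_le:
  "order_isomorphic u v \<Longrightarrow> i < length u \<Longrightarrow> j < length u \<Longrightarrow> u ! i \<le> u ! j \<longleftrightarrow> v ! i \<le> v ! j"
  by (simp add: order_isomorphic_def not_less[symmetric])

lemma order_isomorphic_distinct:
  assumes "order_isomorphic u v" "distinct u"
  shows "distinct v"
  unfolding distinct_conv_nth
proof (intro allI impI)
  fix i j assume ij: "i < length v" "j < length v" "i \<noteq> j"
  with assms have "length u = length v" "u ! i \<noteq> u ! j"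
    by (auto simp: order_isomorphic_def nth_eq_iff_index_eq)
  with assms(1) ij show "v ! i \<noteq> v ! j"
    unfolding order_isomorphic_def by (metis linorder_neqE_nat less_irrefl)
qed

lemma order_isomorphic_map:
  "strict_mono_on (set u) f \<Longrightarrow> order_isomorphic u (map f u)"
  by (simp add: order_isomorphic_def strict_mono_on_less)

lemma order_isomorphic_compw:
  assumes "order_isomorphic s s'" "set u \<subseteq> {1..length s}"
  shows "order_isomorphic (compw s u) (compw s' u)"
proof -
  have "u ! i - 1 < length s" if "i < length u" for i
    using assms(2) that nth_mem by fastforce
  then show ?thesis
    using assms(1) by (simp add: order_isomorphic_def compw_nth)
qed

lemma order_isomorphic_append_shift:
  assumes "order_isomorphic s s'" "order_isomorphic t t'"
    and "set s \<subseteq> {..k}" "set s' \<subseteq> {..k'}" "0 \<notin> set t" "0 \<notin> set t'"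
  shows "order_isomorphic (s @ map (\<lambda>j. j + k) t) (s' @ map (\<lambda>j. j + k') t')"
proof -
  have len: "length s = length s'" "length t = length t'"
    using assms(1,2) by (simp_all add: order_isomorphic_def)
  have "s ! i < t ! j + k" "s' ! i < t' ! j + k'" if "i < length s" "j < length t" for i j
  proof -
    have "s ! i \<le> k" "s' ! i \<le> k'"
      using subsetD[OF assms(3) nth_mem[of i s]] subsetD[OF assms(4) nth_mem[of i s']] that(1) len
      by auto
    moreover have "0 < t ! j" "0 < t' ! j"
      using assms(5,6) nth_mem[of j t] nth_mem[of j t'] that(2) len by (metis gr0I)+
    ultimately show "s ! i < t ! j + k" "s' ! i < t' ! j + k'"
      by simp_all
  qed
  then show ?thesis
    using assms(1,2) len unfolding order_isomorphic_def
    by (auto simp: nth_append not_less) (metis add.commute less_diff_conv2 order_less_asym)+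
qed

lemma stdw_length [simp]: "length (stdw u) = length u"
  by (simp add: stdw_def)

lemma stdw_Nil [simp]: "stdw [] = []"
  by (simp add: stdw_def)

lemma stdw_nth: "i < length u \<Longrightarrow> stdw u ! i = card {y \<in> set u. y \<le> u ! i}"
  by (simp add: stdw_def)

lemma stdw_nth_distinct:
  assumes "distinct u" "i < length u"
  shows "stdw u ! i = card {j. j < length u \<and> u ! j \<le> u ! i}"
proof -
  have "{y \<in> set u. y \<le> u ! i} = (!) u ` {j. j < length u \<and> u ! j \<le> u ! i}"
    by (auto simp: in_set_conv_nth)
  moreover have "inj_on ((!) u) {j. j < length u \<and> u ! j \<le> u ! i}"
    using assms(1) by (auto simp: inj_on_def nth_eq_iff_index_eq)
  ultimately show ?thesis
    using assms(2) by (simp add: stdw_nth card_image)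
qed

lemma order_isomorphic_stdw: "order_isomorphic u (stdw u)"
proof -
  let ?c = "\<lambda>x. card {y \<in> set u. y \<le> x}"
  have "?c x < ?c x'" if "x < x'" "x' \<in> set u" for x x'
  proof (rule psubset_card_mono)
    have "x' \<in> {y \<in> set u. y \<le> x'} - {y \<in> set u. y \<le> x}"
      using that by simp
    then show "{y \<in> set u. y \<le> x} \<subset> {y \<in> set u. y \<le> x'}"
      using that(1) by fastforce
  qed simp
  moreover have "?c x' \<le> ?c x" if "x' \<le> x" for x x'
    by (rule card_mono) (use that in auto)
  ultimately show ?thesis
    unfolding order_isomorphic_def by (simp add: stdw_nth) (meson leD linorder_not_le nth_mem)
qed

lemma stdw_eq_if_order_isomorphic:
  assumes "order_isomorphic u v" "distinct u"
  shows "stdw u = stdw v"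
proof (rule nth_equalityI)
  have "distinct v" and len: "length u = length v"
    using assms order_isomorphic_distinct by (auto simp: order_isomorphic_def)
  fix i assume i: "i < length (stdw u)"
  then have "{j. j < length u \<and> u ! j \<le> u ! i} = {j. j < length v \<and> v ! j \<le> v ! i}"
    using order_isomorphic_le[OF assms(1)] len by auto
  then show "stdw u ! i = stdw v ! i"
    using i assms(2) \<open>distinct v\<close> len by (simp add: stdw_nth_distinct)
qed (simp add: assms(1)[unfolded order_isomorphic_def])

lemma is_perm_stdw:
  assumes "distinct u"
  shows "is_perm (length u) (stdw u)"
proof (rule is_perm_intro)
  show "distinct (stdw u)"
    using assms order_isomorphic_distinct order_isomorphic_stdw by blast
  show "set (stdw u) \<subseteq> {1..length u}"
  proof
    fix x assume "x \<in> set (stdw u)"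
    then obtain i where i: "i < length u" "x = card {y \<in> set u. y \<le> u ! i}"
      by (auto simp: in_set_conv_nth stdw_nth)
    then have "0 < x"
      by (auto simp: card_gt_0_iff intro!: exI[of _ "u ! i"])
    moreover have "x \<le> card (set u)"
      using i by (auto intro: card_mono)
    ultimately show "x \<in> {1..length u}"
      using distinct_card[OF assms] by simp
  qed
qed simp

lemma stdw_is_perm: "is_perm n p \<Longrightarrow> stdw p = p"
proof (rule nth_equalityI)
  fix i assume p: "is_perm n p" and "i < length (stdw p)"
  then have "{y \<in> set p. y \<le> p ! i} = {1..p ! i}"
    using is_perm_nth[OF p, of i] by (auto simp: is_perm_def)
  then show "stdw p ! i = p ! i"
    using \<open>i < length (stdw p)\<close> by (simp add: stdw_nth)
qed simp

lemma stdw_take_stdw: "distinct u \<Longrightarrow> stdw (take i (stdw u)) = stdw (take i u)"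
  by (metis distinct_take order_isomorphic_stdw order_isomorphic_take stdw_eq_if_order_isomorphic)

lemma stdw_drop_stdw: "distinct u \<Longrightarrow> stdw (drop i (stdw u)) = stdw (drop i u)"
  by (metis distinct_drop order_isomorphic_stdw order_isomorphic_drop stdw_eq_if_order_isomorphic)

lemma sorted_wrt_filter_iff_nth:
  "sorted_wrt R (filter P xs) \<longleftrightarrow>
     (\<forall>i j. i < j \<longrightarrow> j < length xs \<longrightarrow> P (xs ! i) \<longrightarrow> P (xs ! j) \<longrightarrow> R (xs ! i) (xs ! j))"
proof (induction xs)
  case (Cons x xs)
  have "(\<forall>i j. i < j \<longrightarrow> j < length (x # xs) \<longrightarrow> P ((x # xs) ! i) \<longrightarrow> P ((x # xs) ! j) \<longrightarrow> R ((x # xs) ! i) ((x # xs) ! j))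
    \<longleftrightarrow> (P x \<longrightarrow> (\<forall>y\<in>set xs. P y \<longrightarrow> R x y)) \<and>
        (\<forall>i j. i < j \<longrightarrow> j < length xs \<longrightarrow> P (xs ! i) \<longrightarrow> P (xs ! j) \<longrightarrow> R (xs ! i) (xs ! j))"
    by (auto simp: nth_Cons in_set_conv_nth split: nat.split) (metis nth_mem)+
  then show ?case
    using Cons.IH by auto
qed simp

lemma pinv_length [simp]: "length (pinv w) = length w"
  by (simp add: pinv_def)

lemma pinv_nth:
  assumes "is_perm n g" "i < n"
  shows "pinv g ! (g ! i - 1) = Suc i"
proof -
  have "(LEAST i'. i' < length g \<and> g ! i' = g ! i) = i"
    using assms is_perm_distinct[OF assms(1)]
    by (intro Least_equality) (auto simp: is_perm_length nth_eq_iff_index_eq leI)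
  moreover have "g ! i - 1 < n" "1 \<le> g ! i"
    using is_perm_nth[OF assms] by auto
  ultimately show ?thesis
    using assms by (simp add: pinv_def is_perm_length)
qed

lemma Sh2_iff_pinv:
  "g \<in> Sh2 n m \<longleftrightarrow>
     is_perm (n + m) g \<and> sorted_wrt (<) (take n (pinv g)) \<and> sorted_wrt (<) (drop n (pinv g))"
proof -
  have shift: "(\<forall>k. a + 1 \<le> k \<and> k < b \<longrightarrow> P (k - 1) k) \<longleftrightarrow>
      (\<forall>i. a + Suc i < b \<longrightarrow> P (a + i) (a + Suc i))" for a b :: nat and P
  proof (intro iffI allI impI)
    fix i assume k: "\<forall>k. a + 1 \<le> k \<and> k < b \<longrightarrow> P (k - 1) k" and "a + Suc i < b"
    then show "P (a + i) (a + Suc i)"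
      using k[rule_format, of "a + Suc i"] by simp
  next
    fix k assume i: "\<forall>i. a + Suc i < b \<longrightarrow> P (a + i) (a + Suc i)" and k: "a + 1 \<le> k \<and> k < b"
    then obtain j where "k = a + Suc j"
      using less_imp_Suc_add[of a k] by auto
    then show "P (k - 1) k"
      using i[rule_format, of j] k by simp
  qed
  show ?thesis
    using shift[of 0 n "\<lambda>i j. pinv g ! i < pinv g ! j"] shift[of n "n + m" "\<lambda>i j. pinv g ! i < pinv g ! j"]
    by (auto simp: Sh2_def sorted_wrt_iff_nth_Suc_transp is_perm_length)
qed

lemma is_perm_surj: "is_perm n w \<Longrightarrow> 1 \<le> v \<Longrightarrow> v \<le> n \<Longrightarrow> \<exists>i<n. w ! i = v"
  unfolding is_perm_def by (metis atLeastAtMost_iff in_set_conv_nth)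

lemma sorted_wrt_take_drop_iff:
  fixes xs :: "'a::linorder list"
  assumes "hi \<le> length xs"
  shows "sorted_wrt (<) (take (hi - lo) (drop lo xs)) \<longleftrightarrow>
    (\<forall>a b. lo < a \<longrightarrow> a < b \<longrightarrow> b \<le> hi \<longrightarrow> xs ! (a - 1) < xs ! (b - 1))"
proof -
  have "sorted_wrt (<) (take (hi - lo) (drop lo xs)) \<longleftrightarrow>
      (\<forall>i j. i < j \<longrightarrow> j < hi - lo \<longrightarrow> xs ! (lo + i) < xs ! (lo + j))"
    using assms by (auto simp: sorted_wrt_iff_nth_less)
  also have "\<dots> \<longleftrightarrow> (\<forall>a b. lo < a \<longrightarrow> a < b \<longrightarrow> b \<le> hi \<longrightarrow> xs ! (a - 1) < xs ! (b - 1))"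
  proof (intro iffI allI impI)
    fix a b assume H: "\<forall>i j. i < j \<longrightarrow> j < hi - lo \<longrightarrow> xs ! (lo + i) < xs ! (lo + j)"
      and "lo < a" "a < b" "b \<le> hi"
    then show "xs ! (a - 1) < xs ! (b - 1)"
      using H[rule_format, of "a - 1 - lo" "b - 1 - lo"] by simp
  next
    fix i j assume H: "\<forall>a b. lo < a \<longrightarrow> a < b \<longrightarrow> b \<le> hi \<longrightarrow> xs ! (a - 1) < xs ! (b - 1)"
      and "i < j" "j < hi - lo"
    then show "xs ! (lo + i) < xs ! (lo + j)"
      using H[rule_format, of "lo + Suc i" "lo + Suc j"] by simp
  qed
  finally show ?thesis .
qed

lemma pinv_increasing_iff:
  assumes g: "is_perm N g" and "hi \<le> N"
  shows "(\<forall>a b. lo < a \<longrightarrow> a < b \<longrightarrow> b \<le> hi \<longrightarrow> pinv g ! (a - 1) < pinv g ! (b - 1)) \<longleftrightarrow>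
    (\<forall>i j. i < j \<longrightarrow> j < N \<longrightarrow> lo < g ! i \<and> g ! i \<le> hi \<longrightarrow> lo < g ! j \<and> g ! j \<le> hi \<longrightarrow>
      g ! i < g ! j)"
proof
  assume mono: "\<forall>a b. lo < a \<longrightarrow> a < b \<longrightarrow> b \<le> hi \<longrightarrow> pinv g ! (a - 1) < pinv g ! (b - 1)"
  show "\<forall>i j. i < j \<longrightarrow> j < N \<longrightarrow> lo < g ! i \<and> g ! i \<le> hi \<longrightarrow> lo < g ! j \<and> g ! j \<le> hi \<longrightarrow>
      g ! i < g ! j"
  proof (intro allI impI)
    fix i j assume ij: "i < j" "j < N" "lo < g ! i \<and> g ! i \<le> hi" "lo < g ! j \<and> g ! j \<le> hi"
    show "g ! i < g ! j"
    proof (rule ccontr)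
      assume "\<not> g ! i < g ! j"
      moreover have "g ! i \<noteq> g ! j"
        using ij is_perm_distinct[OF g] is_perm_length[OF g] by (simp add: nth_eq_iff_index_eq)
      ultimately have "pinv g ! (g ! j - 1) < pinv g ! (g ! i - 1)"
        using mono ij by simp
      then show False
        using ij pinv_nth[OF g] by simp
    qed
  qed
next
  assume incr: "\<forall>i j. i < j \<longrightarrow> j < N \<longrightarrow> lo < g ! i \<and> g ! i \<le> hi \<longrightarrow> lo < g ! j \<and> g ! j \<le> hi \<longrightarrow>
      g ! i < g ! j"
  show "\<forall>a b. lo < a \<longrightarrow> a < b \<longrightarrow> b \<le> hi \<longrightarrow> pinv g ! (a - 1) < pinv g ! (b - 1)"
  proof (intro allI impI)
    fix a b assume ab: "lo < a" "a < b" "b \<le> hi"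
    then have "1 \<le> a" "a \<le> N" "1 \<le> b" "b \<le> N"
      using assms(2) by auto
    then obtain i j where i: "i < N" "g ! i = a" and j: "j < N" "g ! j = b"
      using is_perm_surj[OF g] by meson
    have "\<not> j < i" "i \<noteq> j"
      using incr i j ab by fastforce+
    then show "pinv g ! (a - 1) < pinv g ! (b - 1)"
      using pinv_nth[OF g i(1)] pinv_nth[OF g j(1)] i j by simp
  qed
qed

lemma sorted_pinv_block_iff:
  assumes g: "is_perm N g" and "hi \<le> N"
  shows "sorted_wrt (<) (take (hi - lo) (drop lo (pinv g))) \<longleftrightarrow>
    filter (\<lambda>v. lo < v \<and> v \<le> hi) g = [Suc lo..<Suc hi]"
proof -
  let ?block = "filter (\<lambda>v. lo < v \<and> v \<le> hi) g"
  have "sorted_wrt (<) (take (hi - lo) (drop lo (pinv g))) \<longleftrightarrow> sorted_wrt (<) ?block"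
    using sorted_wrt_take_drop_iff[of hi "pinv g" lo] pinv_increasing_iff[OF assms, of lo] assms
    by (simp add: sorted_wrt_filter_iff_nth is_perm_length)
  moreover have "sorted_wrt (<) ?block \<longleftrightarrow> ?block = [Suc lo..<Suc hi]"
  proof
    have "set ?block = set [Suc lo..<Suc hi]" "distinct ?block"
      using g assms(2) is_perm_distinct[OF g] unfolding is_perm_def by auto
    moreover assume "sorted_wrt (<) ?block"
    ultimately show "?block = [Suc lo..<Suc hi]"
      by (intro sorted_distinct_set_unique) (simp_all add: strict_sorted_iff)
  qed simp
  ultimately show ?thesis
    by simp
qed

lemma Sh2_iff_filter:
  "g \<in> Sh2 n m \<longleftrightarrow> is_perm (n + m) g \<and>
     filter (\<lambda>v. v \<le> n) g = [1..<Suc n] \<and> filter (\<lambda>v. n < v) g = [Suc n..<Suc (n + m)]"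
proof (cases "is_perm (n + m) g")
  case True
  have "filter (\<lambda>v. 0 < v \<and> v \<le> n) g = filter (\<lambda>v. v \<le> n) g"
    "filter (\<lambda>v. n < v \<and> v \<le> n + m) g = filter (\<lambda>v. n < v) g"
    using True by (auto simp: is_perm_def intro!: filter_cong)
  then have "sorted_wrt (<) (take n (pinv g)) \<longleftrightarrow> filter (\<lambda>v. v \<le> n) g = [1..<Suc n]"
    "sorted_wrt (<) (take m (drop n (pinv g))) \<longleftrightarrow> filter (\<lambda>v. n < v) g = [Suc n..<Suc (n + m)]"
    using sorted_pinv_block_iff[OF True, of n 0] sorted_pinv_block_iff[OF True, of "n + m" n]
    by simp_all
  moreover have "take m (drop n (pinv g)) = drop n (pinv g)"
    using True by (simp add: is_perm_length)
  ultimately show ?thesis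
    using True by (simp add: Sh2_iff_pinv)
qed (simp add: Sh2_def)

lemma Sh2_0_left: "g \<in> Sh2 0 k \<Longrightarrow> g = idp k"
proof -
  assume "g \<in> Sh2 0 k"
  then have "is_perm k g" "filter (\<lambda>v. 0 < v) g = [Suc 0..<Suc k]"
    by (simp_all add: Sh2_iff_filter)
  moreover have "filter (\<lambda>v. 0 < v) g = g"
    using calculation(1) by (auto simp: is_perm_def)
  ultimately show ?thesis
    by (simp add: idp_def)
qed

lemma Sh2_0_right: "g \<in> Sh2 k 0 \<Longrightarrow> g = idp k"
proof -
  assume "g \<in> Sh2 k 0"
  then have "is_perm k g" "filter (\<lambda>v. v \<le> k) g = [1..<Suc k]"
    by (simp_all add: Sh2_iff_filter)
  moreover have "filter (\<lambda>v. v \<le> k) g = g"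
    using calculation(1) by (auto simp: is_perm_def)
  ultimately show ?thesis
    by (simp add: idp_def)
qed

lemma shE_eq: "g \<in> Sh2 (length s) (length t) \<Longrightarrow> shE g s t = compw (crossw s t) g"
  by (auto simp: shE_def compw_idp_right dest!: Sh2_0_left Sh2_0_right)

lemma map_plus_upt: "map (\<lambda>v. v + k) [i..<j] = [i + k..<j + k]"
  by (rule nth_equalityI) simp_all

lemma append_eq_upt:
  assumes "xs @ ys = [i..<j]"
  shows "xs = [i..<i + length xs]" and "ys = [i + length xs..<j]"
proof -
  have xs: "xs = take (length xs) [i..<j]" and ys: "ys = drop (length xs) [i..<j]"
    using append_eq_conv_conj[THEN iffD1, OF assms] by simp_all
  have "length xs \<le> j - i"
    using arg_cong[OF assms, of length] by simp
  then have "xs = [] \<or> i + length xs \<le> j"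
    by (cases xs) auto
  then have "take (length xs) [i..<j] = [i..<i + length xs]"
    by auto
  with xs show "xs = [i..<i + length xs]"
    by simp
  from ys show "ys = [i + length xs..<j]"
    by simp
qed

lemma map_shift_upt: "map (\<lambda>v. v - a + b) [Suc a..<Suc (a + p)] = [Suc b..<Suc (b + p)]"
  by (rule nth_equalityI) simp_all

(* x stands for the prefix or the suffix of a shuffle in Sh(n, m): its letters form an interval
  of each of the two blocks of values *)
lemma set_window:
  assumes "filter (\<lambda>v. v \<le> n) x = [Suc a..<Suc (a + p)]"
    and "filter (\<lambda>v. n < v) x = [Suc (n + b)..<Suc (n + b + q)]"
  shows "set x = {Suc a..a + p} \<union> {Suc (n + b)..n + b + q}"
proof -
  have "set x = set (filter (\<lambda>v. v \<le> n) x) \<union> set (filter (\<lambda>v. n < v) x)"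
    by auto
  then show ?thesis
    by (simp add: assms atLeastLessThanSuc_atLeastAtMost)
qed

lemma stdw_shuffle_window:
  fixes x :: word and n a b p q :: nat
  defines "f \<equiv> \<lambda>v. if v \<le> n then v - a else v - n - b + p"
  assumes left: "filter (\<lambda>v. v \<le> n) x = [Suc a..<Suc (a + p)]"
    and right: "filter (\<lambda>v. n < v) x = [Suc (n + b)..<Suc (n + b + q)]"
    and "a + p \<le> n"
  shows "stdw x = map f x" and "stdw x \<in> Sh2 p q"
proof -
  have set_x: "set x = {Suc a..a + p} \<union> {Suc (n + b)..n + b + q}"
    using left right by (rule set_window)
  have "filter (\<lambda>v. v \<le> p) (map f x) = map f (filter (\<lambda>v. v \<le> n) x)"
    unfolding filter_map
    by (intro arg_cong[where f="map f"] filter_cong) (use set_x assms(4) in \<open>auto simp: f_def\<close>)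
  also have "\<dots> = map (\<lambda>v. v - a + 0) [Suc a..<Suc (a + p)]"
    using assms(4) by (auto simp: left f_def)
  finally have left': "filter (\<lambda>v. v \<le> p) (map f x) = [1..<Suc p]"
    by (simp only: map_shift_upt) simp
  have "filter (\<lambda>v. p < v) (map f x) = map f (filter (\<lambda>v. n < v) x)"
    unfolding filter_map
    by (intro arg_cong[where f="map f"] filter_cong) (use set_x assms(4) in \<open>auto simp: f_def\<close>)
  also have "\<dots> = map (\<lambda>v. v - (n + b) + p) [Suc (n + b)..<Suc (n + b + q)]"
    by (auto simp: right f_def)
  finally have right': "filter (\<lambda>v. p < v) (map f x) = [Suc p..<Suc (p + q)]"
    by (simp only: map_shift_upt)
  have "length (map f x) = p + q"
    using sum_length_filter_compl[of "\<lambda>v. v \<le> n" x] left right by (simp add: not_le)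
  moreover have "set (map f x) = set (filter (\<lambda>v. v \<le> p) (map f x)) \<union> set (filter (\<lambda>v. p < v) (map f x))"
    by auto
  ultimately have "is_perm (p + q) (map f x)"
    unfolding is_perm_def left' right' by auto
  then have fx: "map f x \<in> Sh2 p q"
    using left' right' by (simp add: Sh2_iff_filter)
  have "strict_mono_on (set x) f"
    using set_x assms(4) by (auto simp: strict_mono_on_def f_def)
  then have "stdw (map f x) = stdw x"
    using fx is_perm_distinct[of "p + q" "map f x"]
    by (metis Sh2_iff_filter order_isomorphic_map order_isomorphic_sym stdw_eq_if_order_isomorphic)
  then show "stdw x = map f x"
    using fx stdw_is_perm by (auto simp: Sh2_iff_filter)
  with fx show "stdw x \<in> Sh2 p q"
    by simp
qed

lemma compw_crossw_window:
  assumes s: "is_perm n s" and t: "is_perm m t"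
    and left: "filter (\<lambda>v. v \<le> n) x = [Suc a..<Suc (a + p)]"
    and right: "filter (\<lambda>v. n < v) x = [Suc (n + b)..<Suc (n + b + q)]"
    and "a + p \<le> n" "b + q \<le> m"
  shows "compw (crossw s t) x = compw (take p (drop a s) @ map (\<lambda>j. j + n) (take q (drop b t))) (stdw x)"
proof -
  have "set x = {Suc a..a + p} \<union> {Suc (n + b)..n + b + q}"
    using left right by (rule set_window)
  then have "crossw s t ! (v - 1) = (take p (drop a s) @ map (\<lambda>j. j + n) (take q (drop b t))) !
      ((if v \<le> n then v - a else v - n - b + p) - 1)" if "v \<in> set x" for v
    using that assms(5,6) is_perm_length[OF s] is_perm_length[OF t] by (auto simp: crossw_def nth_append)
  then show ?thesis
    by (simp add: compw_def stdw_shuffle_window(1)[OF left right assms(5)])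
qed

lemma stdw_compw_shuffle_window:
  assumes s: "is_perm n s" and t: "is_perm m t"
    and left: "filter (\<lambda>v. v \<le> n) x = [Suc a..<Suc (a + p)]"
    and right: "filter (\<lambda>v. n < v) x = [Suc (n + b)..<Suc (n + b + q)]"
    and "a + p \<le> n" "b + q \<le> m"
  shows "stdw (compw (crossw s t) x) =
    compw (crossw (stdw (take p (drop a s))) (stdw (take q (drop b t)))) (stdw x)"
proof -
  define s' where "s' = take p (drop a s)"
  define t' where "t' = take q (drop b t)"
  have "set s' \<subseteq> set s" "set t' \<subseteq> set t" "distinct s'" "distinct t'"
    using is_perm_distinct[OF s] is_perm_distinct[OF t] unfolding s'_def t'_def
    by (meson distinct_drop distinct_take order_trans set_drop_subset set_take_subset)+
  moreover have "length s' = p" "length t' = q"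
    using assms(5,6) is_perm_length[OF s] is_perm_length[OF t] by (simp_all add: s'_def t'_def)
  ultimately have std_perm: "is_perm p (stdw s')" "is_perm q (stdw t')"
    and "set s' \<subseteq> {..n}" "0 \<notin> set t'"
    using is_perm_stdw[of s'] is_perm_stdw[of t'] s t by (auto simp: is_perm_def)
  then have "order_isomorphic (s' @ map (\<lambda>j. j + n) t') (crossw (stdw s') (stdw t'))"
    unfolding crossw_def
    by (intro order_isomorphic_append_shift order_isomorphic_stdw) (auto simp: is_perm_def)
  moreover have x_perm: "is_perm (p + q) (stdw x)"
    using stdw_shuffle_window(2)[OF left right assms(5)] by (simp add: Sh2_iff_filter)
  ultimately have "order_isomorphic (compw (crossw s t) x) (compw (crossw (stdw s') (stdw t')) (stdw x))"
    using compw_crossw_window[OF assms] \<open>length s' = p\<close> \<open>length t' = q\<close>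
    by (auto simp: s'_def t'_def is_perm_def intro: order_isomorphic_compw)
  moreover have "is_perm (p + q) (compw (crossw (stdw s') (stdw t')) (stdw x))"
    using is_perm_crossw[OF std_perm] x_perm by (rule is_perm_compw)
  ultimately show ?thesis
    unfolding s'_def[symmetric] t'_def[symmetric]
    by (metis is_perm_distinct order_isomorphic_sym stdw_eq_if_order_isomorphic stdw_is_perm)
qed

locale shuffle_cut =
  fixes n m r :: nat and g :: word
  assumes shuffle: "g \<in> Sh2 n m" and cut: "r \<le> n + m"
begin

definition n1 :: nat where "n1 = length (filter (\<lambda>v. v \<le> n) (take r g))"
definition m1 :: nat where "m1 = length (filter (\<lambda>v. n < v) (take r g))"

lemma g_perm: "is_perm (n + m) g"
  using shuffle by (simp add: Sh2_iff_filter)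

lemma left_filters:
  "filter (\<lambda>v. v \<le> n) (take r g) = [Suc 0..<Suc n1]"
  "filter (\<lambda>v. v \<le> n) (drop r g) = [Suc n1..<Suc n]" and n1_le: "n1 \<le> n"
proof -
  have split: "filter (\<lambda>v. v \<le> n) (take r g) @ filter (\<lambda>v. v \<le> n) (drop r g) = [1..<Suc n]"
    using shuffle by (simp add: Sh2_iff_filter flip: filter_append)
  show "filter (\<lambda>v. v \<le> n) (take r g) = [Suc 0..<Suc n1]"
    "filter (\<lambda>v. v \<le> n) (drop r g) = [Suc n1..<Suc n]"
    using append_eq_upt[OF split] unfolding n1_def[symmetric] by simp_all
  show "n1 \<le> n"
    using arg_cong[OF split, of length] by (simp add: n1_def)
qed

lemma right_filters:
  "filter (\<lambda>v. n < v) (take r g) = [Suc n..<Suc (n + m1)]"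
  "filter (\<lambda>v. n < v) (drop r g) = [Suc (n + m1)..<Suc (n + m)]" and m1_le: "m1 \<le> m"
proof -
  have split: "filter (\<lambda>v. n < v) (take r g) @ filter (\<lambda>v. n < v) (drop r g) = [Suc n..<Suc (n + m)]"
    using shuffle by (simp add: Sh2_iff_filter flip: filter_append)
  show "filter (\<lambda>v. n < v) (take r g) = [Suc n..<Suc (n + m1)]"
    "filter (\<lambda>v. n < v) (drop r g) = [Suc (n + m1)..<Suc (n + m)]"
    using append_eq_upt[OF split] unfolding m1_def[symmetric] by simp_all
  show "m1 \<le> m"
    using arg_cong[OF split, of length] by (simp add: m1_def)
qed

lemma n1_plus_m1: "n1 + m1 = r"
proof -
  have "length (take r g) = r"
    using cut is_perm_length[OF g_perm] by simp
  then show ?thesis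
    using sum_length_filter_compl[of "\<lambda>v. v \<le> n" "take r g"] unfolding n1_def m1_def not_le
    by linarith
qed

lemma n1_of_eq: "n1_of g n r = n1"
proof -
  have "{i \<in> {1..r}. g ! (i - 1) \<in> {1..n}} = Suc ` {i. i < r \<and> g ! i \<le> n}"
    using cut is_perm_nth[OF g_perm] by (force simp: image_iff)
  moreover have "{i. i < r \<and> take r g ! i \<le> n} = {i. i < r \<and> g ! i \<le> n}"
    by auto
  ultimately show ?thesis
    using cut g_perm by (simp add: n1_of_def n1_def length_filter_conv_card card_image is_perm_length)
qed

lemma set_take: "set (take r g) = {1..n1} \<union> {Suc n..n + m1}"
  using set_window[of n "take r g" 0 n1 0 m1] left_filters right_filters by simp

lemma set_drop: "set (drop r g) = {Suc n1..n} \<union> {Suc (n + m1)..n + m}"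
  using set_window[of n "drop r g" n1 "n - n1" m1 "m - m1"] left_filters right_filters n1_le m1_le
  by simp

lemma stdw_take:
  "stdw (take r g) = map (\<lambda>v. if v \<le> n then v else v - n + n1) (take r g)"
  "stdw (take r g) \<in> Sh2 n1 m1"
  using stdw_shuffle_window[of n "take r g" 0 n1 0 m1] left_filters right_filters n1_le by simp_all

lemma stdw_drop:
  "stdw (drop r g) = map (\<lambda>v. if v \<le> n then v - n1 else v - n - m1 + (n - n1)) (drop r g)"
  "stdw (drop r g) \<in> Sh2 (n - n1) (m - m1)"
  using stdw_shuffle_window[of n "drop r g" n1 "n - n1" m1 "m - m1"] left_filters right_filters n1_le m1_le
  by simp_all

definition middle_swap :: word where
  "middle_swap = crossw (crossw (idp n1) (eps (n - n1) m1)) (idp (m - m1))"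

lemma is_perm_middle_swap: "is_perm (n + m) middle_swap"
  using is_perm_crossw[OF is_perm_crossw[OF is_perm_idp is_perm_eps] is_perm_idp, of n1 "n - n1" m1 "m - m1"]
    n1_le m1_le by (simp add: middle_swap_def)

lemma middle_swap_eq:
  "middle_swap = [1..<Suc n1] @ [Suc n..<Suc (n + m1)] @ [Suc n1..<Suc n] @ [Suc (n + m1)..<Suc (n + m)]"
  using n1_le m1_le by (simp add: middle_swap_def crossw_def idp_def eps_def map_plus_upt add.commute)

lemma middle_swap_nth_take:
  assumes "v \<in> set (take r g)"
  shows "middle_swap ! ((if v \<le> n then v else v - n + n1) - 1) = v"
proof (cases "v \<le> n")
  case True
  with assms set_take have "1 \<le> v" "v - 1 < n1"
    by auto
  then show ?thesis
    using True by (simp add: middle_swap_eq nth_append)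
next
  case False
  with assms set_take n1_le have "n < v" "v \<le> n + m1"
    by auto
  then show ?thesis
    using n1_le by (auto simp: middle_swap_eq nth_append)
qed

lemma middle_swap_nth_drop:
  assumes "v \<in> set (drop r g)"
  shows "middle_swap ! ((if v \<le> n then v - n1 else v - n - m1 + (n - n1)) + r - 1) = v"
proof (cases "v \<le> n")
  case True
  with assms set_drop have "n1 < v" "v \<le> n"
    by auto
  then show ?thesis
    using n1_plus_m1 by (auto simp: middle_swap_eq nth_append)
next
  case False
  with assms set_drop have "n + m1 < v" "v \<le> n + m"
    by auto
  then show ?thesis
    using n1_le n1_plus_m1 by (auto simp: middle_swap_eq nth_append)
qed

lemma compw_middle_swap: "compw middle_swap (crossw (stdw (take r g)) (stdw (drop r g))) = g"
proof -
  have "map (\<lambda>v. middle_swap ! ((if v \<le> n then v else v - n + n1) - 1)) (take r g) = take r g"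
    "map (\<lambda>v. middle_swap ! ((if v \<le> n then v - n1 else v - n - m1 + (n - n1)) + r - 1)) (drop r g)
      = drop r g"
    using middle_swap_nth_take middle_swap_nth_drop by (simp_all add: map_idI)
  moreover have "length (take r g) = r"
    using cut is_perm_length[OF g_perm] by simp
  ultimately show ?thesis
    by (simp add: compw_def crossw_def stdw_take stdw_drop o_def)
qed

lemma dec_eq: "dec g n m r = (stdw (take r g), stdw (drop r g))"
proof -
  have crossw_perm: "is_perm (n + m) (crossw a b)" if "a \<in> Sh2 n1 m1" "b \<in> Sh2 (n - n1) (m - m1)" for a b
    using is_perm_crossw[of "n1 + m1" a "n - n1 + (m - m1)" b] that n1_le m1_le
    by (simp add: Sh2_iff_filter)
  have "r - n1 = m1"
    using n1_plus_m1 by simp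
  then have "dec g n m r = (THE (a, b). a \<in> Sh2 n1 m1 \<and> b \<in> Sh2 (n - n1) (m - m1) \<and>
      g = compw middle_swap (crossw a b))"
    by (simp add: dec_def n1_of_eq Let_def middle_swap_def)
  also have "\<dots> = (stdw (take r g), stdw (drop r g))"
  proof (rule the_equality)
    fix ab assume "case ab of (a, b) \<Rightarrow>
      a \<in> Sh2 n1 m1 \<and> b \<in> Sh2 (n - n1) (m - m1) \<and> g = compw middle_swap (crossw a b)"
    then obtain a b where ab: "ab = (a, b)" "a \<in> Sh2 n1 m1" "b \<in> Sh2 (n - n1) (m - m1)"
      and "compw middle_swap (crossw a b) = compw middle_swap (crossw (stdw (take r g)) (stdw (drop r g)))"
      using compw_middle_swap by auto
    then have "crossw a b = crossw (stdw (take r g)) (stdw (drop r g))"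
      using compw_cancel[OF is_perm_middle_swap] crossw_perm[OF ab(2,3)]
        crossw_perm[OF stdw_take(2) stdw_drop(2)]
      by (simp add: is_perm_def)
    moreover have "length a = length (stdw (take r g))"
      using ab(2) stdw_take(2) by (metis Sh2_iff_filter is_perm_length)
    ultimately show "ab = (stdw (take r g), stdw (drop r g))"
      using ab(1) crossw_cancel by blast
  qed (simp add: stdw_take(2) stdw_drop(2) compw_middle_swap)
  finally show ?thesis .
qed

lemma stdw_take_compw:
  assumes "is_perm n s" "is_perm m t"
  shows "stdw (take r (compw (crossw s t) g)) =
    compw (crossw (stdw (take n1 s)) (stdw (take m1 t))) (stdw (take r g))"
  using stdw_compw_shuffle_window[OF assms, of "take r g" 0 n1 0 m1] left_filters right_filters
    n1_le m1_le
  by (simp add: compw_def take_map)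

lemma stdw_drop_compw:
  assumes "is_perm n s" "is_perm m t"
  shows "stdw (drop r (compw (crossw s t) g)) =
    compw (crossw (stdw (drop n1 s)) (stdw (drop m1 t))) (stdw (drop r g))"
  using stdw_compw_shuffle_window[OF assms, of "drop r g" n1 "n - n1" m1 "m - m1"] left_filters
    right_filters n1_le m1_le is_perm_length[OF assms(1)] is_perm_length[OF assms(2)]
  by (simp add: compw_def drop_map)

end

definition lin_ext :: "('a \<Rightarrow> 'k::zero \<Rightarrow> 'b::comm_monoid_add) \<Rightarrow> ('a \<Rightarrow>\<^sub>0 'k) \<Rightarrow> 'b" where
  "lin_ext F x = (\<Sum>p\<in>Poly_Mapping.keys x. F p (Poly_Mapping.lookup x p))"

lemma lin_ext_superset:
  assumes "finite S" "Poly_Mapping.keys x \<subseteq> S" "\<And>p. F p 0 = 0"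
  shows "lin_ext F x = (\<Sum>p\<in>S. F p (Poly_Mapping.lookup x p))"
  unfolding lin_ext_def using assms by (intro sum.mono_neutral_left) (auto simp: in_keys_iff)

lemma additive_lin_ext:
  assumes "\<And>p. additive (F p)"
  shows "additive (lin_ext F)"
proof
  fix x y :: "'a \<Rightarrow>\<^sub>0 'b"
  let ?S = "Poly_Mapping.keys x \<union> Poly_Mapping.keys y"
  have zero: "F p 0 = 0" for p
    using assms additive.zero by blast
  have "lin_ext F (x + y) = (\<Sum>p\<in>?S. F p (Poly_Mapping.lookup (x + y) p))"
    using keys_add[of x y] zero by (intro lin_ext_superset) auto
  also have "\<dots> = (\<Sum>p\<in>?S. F p (Poly_Mapping.lookup x p)) + (\<Sum>p\<in>?S. F p (Poly_Mapping.lookup y p))"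
    using assms by (simp add: lookup_add additive.add sum.distrib)
  also have "\<dots> = lin_ext F x + lin_ext F y"
    using zero by (simp add: lin_ext_superset[where S = ?S])
  finally show "lin_ext F (x + y) = lin_ext F x + lin_ext F y" .
qed

lemma lin_ext_sum:
  "(\<And>p. additive (F p)) \<Longrightarrow> lin_ext F (sum f A) = (\<Sum>i\<in>A. lin_ext F (f i))"
  using additive.sum[OF additive_lin_ext] by blast

lemma lin_ext_single:
  "(\<And>p. additive (F p)) \<Longrightarrow> lin_ext F (Poly_Mapping.single q c) = F q c"
  by (simp add: lin_ext_def additive.zero)

lemma additive_single: "additive (Poly_Mapping.single k)"
  by (simp add: additive_def single_add)

lemma additive_single_mult: "additive (\<lambda>c. Poly_Mapping.single k (c * e :: 'k::ring))"
  by (simp add: additive_def single_add distrib_right)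

lemma additive_sum: "(\<And>i. additive (f i)) \<Longrightarrow> additive (\<lambda>c. \<Sum>i\<in>A. f i c)"
  by (simp add: additive_def additive.add sum.distrib)

lemma keys_sum_sum_single:
  "Poly_Mapping.keys (\<Sum>i\<in>I. \<Sum>j\<in>J i. Poly_Mapping.single (p i j) (c i j)) \<subseteq>
    {p i j |i j. i \<in> I \<and> j \<in> J i}"
proof -
  have "Poly_Mapping.keys (\<Sum>i\<in>I. \<Sum>j\<in>J i. Poly_Mapping.single (p i j) (c i j)) \<subseteq>
      (\<Union>i\<in>I. Poly_Mapping.keys (\<Sum>j\<in>J i. Poly_Mapping.single (p i j) (c i j)))"
    by (rule keys_sum)
  also have "\<dots> \<subseteq> (\<Union>i\<in>I. \<Union>j\<in>J i. Poly_Mapping.keys (Poly_Mapping.single (p i j) (c i j)))"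
    by (intro UN_mono order.refl keys_sum)
  also have "\<dots> \<subseteq> {p i j |i j. i \<in> I \<and> j \<in> J i}"
    by (auto split: if_splits)
  finally show ?thesis .
qed

lemma shprod_eq_lin_ext:
  "shprod g x y =
    lin_ext (\<lambda>s a. lin_ext (\<lambda>t b. Poly_Mapping.single (compw (crossw s t) g) (a * b)) y) x"
  by (simp add: shprod_def lin_ext_def)

lemma additive_lin_ext_mult:
  "(\<And>t. additive (G t)) \<Longrightarrow> additive (\<lambda>a. lin_ext (\<lambda>t b. G t (a * b :: 'k::ring)) y)"
  by (simp add: additive_def lin_ext_def distrib_right additive.add sum.distrib)

lemma shprod_sum_sum_left:
  "shprod g (\<Sum>i\<in>I. \<Sum>j\<in>J. Poly_Mapping.single (p i j) (\<alpha> i j)) y =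
    (\<Sum>i\<in>I. \<Sum>j\<in>J. \<Sum>t\<in>Poly_Mapping.keys y.
      Poly_Mapping.single (compw (crossw (p i j) t) g) (\<alpha> i j * Poly_Mapping.lookup y t))"
proof -
  have "additive (\<lambda>a. lin_ext (\<lambda>t b. Poly_Mapping.single (compw (crossw s t) g) (a * b)) y)" for s
    by (rule additive_lin_ext_mult) (rule additive_single)
  then show ?thesis
    by (simp add: shprod_eq_lin_ext lin_ext_sum lin_ext_single) (simp add: lin_ext_def)
qed

lemma shprod_sum_sum_right:
  "shprod g x (\<Sum>i\<in>I. \<Sum>j\<in>J. Poly_Mapping.single (q i j) (\<beta> i j)) =
    (\<Sum>s\<in>Poly_Mapping.keys x. \<Sum>i\<in>I. \<Sum>j\<in>J.
      Poly_Mapping.single (compw (crossw s (q i j)) g) (Poly_Mapping.lookup x s * \<beta> i j))"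
  by (simp add: shprod_eq_lin_ext lin_ext_sum lin_ext_single additive_def single_add distrib_left)
    (simp add: lin_ext_def)

lemma inA_shprod:
  assumes "inA n x" "inA m y" "g \<in> Sh2 n m"
  shows "inA (n + m) (shprod g x y)"
  unfolding inA_def
proof
  fix w assume "w \<in> Poly_Mapping.keys (shprod g x y)"
  then have "w \<in> {compw (crossw s t) g |s t. s \<in> Poly_Mapping.keys x \<and> t \<in> Poly_Mapping.keys y}"
    unfolding shprod_def by (rule subsetD[OF keys_sum_sum_single])
  then obtain s t where "w = compw (crossw s t) g" "s \<in> Poly_Mapping.keys x" "t \<in> Poly_Mapping.keys y"
    by blast
  with assms show "1 \<le> n + m \<and> is_perm (n + m) w"
    by (auto simp: inA_def Sh2_iff_filter intro!: is_perm_compw is_perm_crossw)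
qed

lemma compw_crossw_assoc:
  assumes s: "is_perm n s" and t: "is_perm m t" and u: "is_perm r u"
    and g: "is_perm (n + (m + r)) g" and d: "is_perm (m + r) d"
    and s': "is_perm (n + m) s'" and l: "is_perm (n + m + r) l"
    and e: "compw (crossw (idp n) d) g = compw (crossw s' (idp r)) l"
  shows "compw (crossw s (compw (crossw t u) d)) g = compw (crossw (compw (crossw s t) s') u) l"
proof -
  have len: "length s = n" "length t = m" "length u = r" "length d = m + r" "length s' = n + m"
    using assms by (simp_all add: is_perm_length)
  have "crossw s (compw (crossw t u) d) = compw (crossw s (crossw t u)) (crossw (idp n) d)"
    using crossw_compw[where s = s and t = "idp n" and u = "crossw t u" and v = d] compw_idp_right[of s n] len d
    by (simp add: is_perm_def idp_def atLeastLessThanSuc_atLeastAtMost)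
  moreover have "crossw (compw (crossw s t) s') u = compw (crossw (crossw s t) u) (crossw s' (idp r))"
    using crossw_compw[where s = "crossw s t" and t = s' and u = u and v = "idp r"] compw_idp_right[of u r] len s'
    by (simp add: is_perm_def idp_def atLeastLessThanSuc_atLeastAtMost)
  ultimately show ?thesis
    using compw_assoc[of g "crossw (idp n) d" "crossw s (crossw t u)"]
      compw_assoc[of l "crossw s' (idp r)" "crossw (crossw s t) u"] e g l len
    by (simp add: is_perm_def crossw_assoc)
qed

lemma shprod_assoc:
  fixes x y z :: "word \<Rightarrow>\<^sub>0 'k::field"
  assumes x: "inA n x" and y: "inA m y" and z: "inA r z"
    and g: "g \<in> Sh2 n (m + r)" and d: "d \<in> Sh2 m r" and s: "s \<in> Sh2 n m" and l: "l \<in> Sh2 (n + m) r"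
    and e: "compw (crossw (idp n) d) g = compw (crossw s (idp r)) l"
  shows "shprod g x (shprod d y z) = shprod l (shprod s x y) z"
proof -
  let ?X = "Poly_Mapping.keys x" and ?Y = "Poly_Mapping.keys y" and ?Z = "Poly_Mapping.keys z"
  let ?x = "Poly_Mapping.lookup x" and ?y = "Poly_Mapping.lookup y" and ?z = "Poly_Mapping.lookup z"
  have "shprod g x (shprod d y z) = (\<Sum>a\<in>?X. \<Sum>b\<in>?Y. \<Sum>c\<in>?Z.
      Poly_Mapping.single (compw (crossw a (compw (crossw b c) d)) g) (?x a * (?y b * ?z c)))"
    unfolding shprod_def[of d y z] by (rule shprod_sum_sum_right)
  also have "\<dots> = (\<Sum>a\<in>?X. \<Sum>b\<in>?Y. \<Sum>c\<in>?Z.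
      Poly_Mapping.single (compw (crossw (compw (crossw a b) s) c) l) (?x a * ?y b * ?z c))"
  proof (intro sum.cong refl)
    fix a b c assume "a \<in> ?X" "b \<in> ?Y" "c \<in> ?Z"
    then have "is_perm n a" "is_perm m b" "is_perm r c"
      using x y z by (auto simp: inA_def)
    then show "Poly_Mapping.single (compw (crossw a (compw (crossw b c) d)) g) (?x a * (?y b * ?z c)) =
        Poly_Mapping.single (compw (crossw (compw (crossw a b) s) c) l) (?x a * ?y b * ?z c)"
      using compw_crossw_assoc[OF _ _ _ _ _ _ _ e] g d s l
      by (simp add: Sh2_iff_filter add.assoc mult.assoc)
  qed
  also have "\<dots> = shprod l (shprod s x y) z"
    unfolding shprod_def[of s x y] by (rule shprod_sum_sum_left[symmetric])
  finally show ?thesis .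
qed

lemma DeltaMR_graded:
  assumes "inA n x" "(u, v) \<in> Poly_Mapping.keys (DeltaMR x)"
  shows "\<exists>i. 1 \<le> i \<and> i \<le> n - 1 \<and> is_perm i u \<and> is_perm (n - i) v"
proof -
  have "(u, v) \<in> {(stdw (take r s), stdw (drop r s)) |s r. s \<in> Poly_Mapping.keys x \<and> r \<in> {1..<length s}}"
    using assms(2) unfolding DeltaMR_def by (rule subsetD[OF keys_sum_sum_single])
  then obtain s r where "(u, v) = (stdw (take r s), stdw (drop r s))" "s \<in> Poly_Mapping.keys x"
      "r \<in> {1..<length s}"
    by blast
  moreover from this have "is_perm n s"
    using assms(1) by (simp add: inA_def)
  ultimately show ?thesis
    using is_perm_stdw[of "take r s"] is_perm_stdw[of "drop r s"]
    by (auto simp: is_perm_length is_perm_distinct intro!: exI[of _ r])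
qed

abbreviation std_cut :: "word \<Rightarrow> nat \<Rightarrow> word \<times> word" where
  "std_cut s r \<equiv> (stdw (take r s), stdw (drop r s))"

lemma DeltaMR_single_one:
  "DeltaMR (Poly_Mapping.single u (1::'k::field)) =
    (\<Sum>i\<in>{1..<length u}. Poly_Mapping.single (std_cut u i) 1)"
  by (simp add: DeltaMR_def)

lemma Delta_id_eq_lin_ext:
  "Delta_id t = lin_ext (\<lambda>p (c :: 'k::field). \<Sum>i\<in>{1..<length (fst p)}.
    Poly_Mapping.single (stdw (take i (fst p)), stdw (drop i (fst p)), snd p) c) t"
proof -
  have "(\<Sum>(a, b)\<in>Poly_Mapping.keys (DeltaMR (Poly_Mapping.single u (1::'k))).
      Poly_Mapping.single (a, b, v) (c * Poly_Mapping.lookup (DeltaMR (Poly_Mapping.single u 1)) (a, b))) =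
    (\<Sum>i\<in>{1..<length u}. Poly_Mapping.single (stdw (take i u), stdw (drop i u), v) c)"
    for u v :: word and c :: 'k
  proof -
    have "additive (\<lambda>e. Poly_Mapping.single (fst p, snd p, v) (c * e))" for p :: "word \<times> word"
      by (simp add: additive_def single_add distrib_left)
    then have "lin_ext (\<lambda>p e. Poly_Mapping.single (fst p, snd p, v) (c * e)) (DeltaMR (Poly_Mapping.single u 1)) =
        (\<Sum>i\<in>{1..<length u}. Poly_Mapping.single (stdw (take i u), stdw (drop i u), v) c)"
      by (simp add: DeltaMR_single_one lin_ext_sum lin_ext_single)
    then show ?thesis
      by (simp add: lin_ext_def split_def)
  qed
  then show ?thesis
    by (simp add: Delta_id_def lin_ext_def split_def)
qed

lemma id_Delta_eq_lin_ext:
  "id_Delta t = lin_ext (\<lambda>p (c :: 'k::field). \<Sum>i\<in>{1..<length (snd p)}.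
    Poly_Mapping.single (fst p, stdw (take i (snd p)), stdw (drop i (snd p))) c) t"
proof -
  have "(\<Sum>(a, b)\<in>Poly_Mapping.keys (DeltaMR (Poly_Mapping.single v (1::'k))).
      Poly_Mapping.single (u, a, b) (c * Poly_Mapping.lookup (DeltaMR (Poly_Mapping.single v 1)) (a, b))) =
    (\<Sum>i\<in>{1..<length v}. Poly_Mapping.single (u, stdw (take i v), stdw (drop i v)) c)"
    for u v :: word and c :: 'k
  proof -
    have "additive (\<lambda>e. Poly_Mapping.single (u, fst p, snd p) (c * e))" for p :: "word \<times> word"
      by (simp add: additive_def single_add distrib_left)
    then have "lin_ext (\<lambda>p e. Poly_Mapping.single (u, fst p, snd p) (c * e)) (DeltaMR (Poly_Mapping.single v 1)) =
        (\<Sum>i\<in>{1..<length v}. Poly_Mapping.single (u, stdw (take i v), stdw (drop i v)) c)"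
      by (simp add: DeltaMR_single_one lin_ext_sum lin_ext_single)
    then show ?thesis
      by (simp add: lin_ext_def split_def)
  qed
  then show ?thesis
    by (simp add: id_Delta_def lin_ext_def split_def)
qed

lemma sum_triangle_reindex:
  fixes n :: nat
  shows "(\<Sum>r\<in>{1..<n}. \<Sum>i\<in>{1..<r}. F i r) = (\<Sum>i\<in>{1..<n}. \<Sum>j\<in>{1..<n - i}. F i (i + j))"
proof -
  have "(\<Sum>r\<in>{1..<n}. \<Sum>i\<in>{1..<r}. F i r) = (\<Sum>(r, i)\<in>Sigma {1..<n} (\<lambda>r. {1..<r}). F i r)"
    by (rule sum.Sigma) auto
  also have "\<dots> = (\<Sum>(i, j)\<in>Sigma {1..<n} (\<lambda>i. {1..<n - i}). F i (i + j))"
    by (rule sum.reindex_bij_witness[where i = "\<lambda>(i, j). (i + j, i)" and j = "\<lambda>(r, i). (i, r - i)"]) auto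
  also have "\<dots> = (\<Sum>i\<in>{1..<n}. \<Sum>j\<in>{1..<n - i}. F i (i + j))"
    by (rule sum.Sigma[symmetric]) auto
  finally show ?thesis .
qed

lemma DeltaMR_coassoc:
  fixes x :: "word \<Rightarrow>\<^sub>0 'k::field"
  assumes "inAll x"
  shows "Delta_id (DeltaMR x) = id_Delta (DeltaMR x)"
proof -
  let ?X = "Poly_Mapping.keys x" and ?x = "Poly_Mapping.lookup x"
  have distinct: "distinct s" if "s \<in> ?X" for s
    using assms that by (auto simp: inAll_def is_perm_distinct)
  have "Delta_id (DeltaMR x) = (\<Sum>s\<in>?X. \<Sum>r\<in>{1..<length s}. \<Sum>i\<in>{1..<r}.
      Poly_Mapping.single (stdw (take i (stdw (take r s))), stdw (drop i (stdw (take r s))), stdw (drop r s))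
        (?x s))"
    by (simp add: Delta_id_eq_lin_ext DeltaMR_def lin_ext_sum lin_ext_single additive_sum additive_single)
  also have "\<dots> = (\<Sum>s\<in>?X. \<Sum>r\<in>{1..<length s}. \<Sum>i\<in>{1..<r}.
      Poly_Mapping.single (stdw (take i s), stdw (take (r - i) (drop i s)), stdw (drop r s)) (?x s))"
    by (intro sum.cong refl) (simp add: distinct stdw_take_stdw stdw_drop_stdw drop_take)
  also have "\<dots> = (\<Sum>s\<in>?X. \<Sum>i\<in>{1..<length s}. \<Sum>j\<in>{1..<length s - i}.
      Poly_Mapping.single (stdw (take i s), stdw (take j (drop i s)), stdw (drop (i + j) s)) (?x s))"
    by (rule sum.cong[OF refl], subst sum_triangle_reindex) simp
  also have "\<dots> = (\<Sum>s\<in>?X. \<Sum>i\<in>{1..<length s}. \<Sum>j\<in>{1..<length s - i}.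
      Poly_Mapping.single (stdw (take i s), stdw (take j (stdw (drop i s))), stdw (drop j (stdw (drop i s))))
        (?x s))"
    by (intro sum.cong refl) (simp add: distinct stdw_take_stdw stdw_drop_stdw add.commute)
  also have "\<dots> = id_Delta (DeltaMR x)"
    by (simp add: id_Delta_eq_lin_ext DeltaMR_def lin_ext_sum lin_ext_single additive_sum additive_single)
  finally show ?thesis .
qed

definition compat_term :: "word \<Rightarrow> nat \<Rightarrow> nat \<Rightarrow> nat \<Rightarrow> word \<Rightarrow> word \<Rightarrow> word \<times> word" where
  "compat_term g n m r s t =
    (shE (fst (dec g n m r)) (stdw (take (n1_of g n r) s)) (stdw (take (r - n1_of g n r) t)),
     shE (snd (dec g n m r)) (stdw (drop (n1_of g n r) s)) (stdw (drop (r - n1_of g n r) t)))"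

lemma std_cut_shuffle_product:
  assumes "g \<in> Sh2 n m" "r \<le> n + m" "is_perm n s" "is_perm m t"
  shows "std_cut (compw (crossw s t) g) r = compat_term g n m r s t"
proof -
  interpret shuffle_cut n m r g
    using assms(1,2) by unfold_locales
  have "r - n1 = m1"
    using n1_plus_m1 by simp
  moreover have "length (stdw (take n1 s)) = n1" "length (stdw (take m1 t)) = m1"
    "length (stdw (drop n1 s)) = n - n1" "length (stdw (drop m1 t)) = m - m1"
    using n1_le m1_le is_perm_length[OF assms(3)] is_perm_length[OF assms(4)] by simp_all
  ultimately show ?thesis
    using stdw_take(2) stdw_drop(2) stdw_take_compw[OF assms(3,4)] stdw_drop_compw[OF assms(3,4)]
    by (simp add: compat_term_def n1_of_eq dec_eq shE_eq)
qed

lemma Delta_plus_eq: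
  assumes "inA n x"
  shows "Delta_plus x = (\<Sum>s\<in>Poly_Mapping.keys x. \<Sum>k\<in>{0..n}.
    Poly_Mapping.single (std_cut s k) (Poly_Mapping.lookup x s))"
  unfolding Delta_plus_def DeltaMR_def sum.distrib[symmetric]
proof (rule sum.cong[OF refl])
  fix s assume "s \<in> Poly_Mapping.keys x"
  then have n: "1 \<le> n" and s: "is_perm n s"
    using assms by (auto simp: inA_def)
  have "{0..n} = insert 0 (insert n {1..<n})"
    using n by auto
  then show "Poly_Mapping.single (s, []) (Poly_Mapping.lookup x s) +
      Poly_Mapping.single ([], s) (Poly_Mapping.lookup x s) +
      (\<Sum>r\<in>{1..<length s}. Poly_Mapping.single (std_cut s r) (Poly_Mapping.lookup x s)) =
    (\<Sum>k\<in>{0..n}. Poly_Mapping.single (std_cut s k) (Poly_Mapping.lookup x s))"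
    using n stdw_is_perm[OF s] is_perm_length[OF s] by (simp add: ac_simps)
qed

lemma additive_if: "additive f \<Longrightarrow> additive (\<lambda>c. if P then f c else 0)"
  by (simp add: additive_def additive.add)

lemma sum_Delta_plus_component:
  fixes x :: "word \<Rightarrow>\<^sub>0 'k::field"
  assumes x: "inA n x" and "k \<le> n" and F: "\<And>p. additive (F p)"
  shows "(\<Sum>p\<in>{p \<in> Poly_Mapping.keys (Delta_plus x). length (fst p) = k}.
      F p (Poly_Mapping.lookup (Delta_plus x) p)) =
    (\<Sum>s\<in>Poly_Mapping.keys x. F (std_cut s k) (Poly_Mapping.lookup x s))"
proof -
  have "(\<Sum>p\<in>{p \<in> Poly_Mapping.keys (Delta_plus x). length (fst p) = k}.
      F p (Poly_Mapping.lookup (Delta_plus x) p)) =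
    lin_ext (\<lambda>p c. if length (fst p) = k then F p c else 0) (Delta_plus x)"
    by (simp add: lin_ext_def sum.inter_filter)
  also have "\<dots> = (\<Sum>s\<in>Poly_Mapping.keys x. \<Sum>j\<in>{0..n}.
      if j = k then F (std_cut s j) (Poly_Mapping.lookup x s) else 0)"
  proof -
    have "length (stdw (take j s)) = j" if "s \<in> Poly_Mapping.keys x" "j \<le> n" for s j
      using that x by (auto simp: inA_def is_perm_length)
    then show ?thesis
      by (simp add: Delta_plus_eq[OF x] lin_ext_sum lin_ext_single additive_if F cong: if_cong)
  qed
  also have "\<dots> = (\<Sum>s\<in>Poly_Mapping.keys x. F (std_cut s k) (Poly_Mapping.lookup x s))"
    using assms(2) by simp
  finally show ?thesis .
qed

lemma compat_rhs_eq:
  fixes x y :: "word \<Rightarrow>\<^sub>0 'k::field"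
  assumes x: "inA n x" and y: "inA m y" and g: "g \<in> Sh2 n m"
  shows "compat_rhs g n m x y = (\<Sum>r\<in>{1..<n + m}. \<Sum>s\<in>Poly_Mapping.keys x. \<Sum>t\<in>Poly_Mapping.keys y.
    Poly_Mapping.single (compat_term g n m r s t) (Poly_Mapping.lookup x s * Poly_Mapping.lookup y t))"
  unfolding compat_rhs_def Let_def
proof (rule sum.cong[OF refl])
  fix r assume "r \<in> {1..<n + m}"
  then interpret shuffle_cut n m r g
    using g by unfold_locales auto
  let ?k = "n1_of g n r" and ?g1 = "fst (dec g n m r)" and ?g2 = "snd (dec g n m r)"
  have k: "?k \<le> n" "r - ?k \<le> m"
    using n1_le m1_le n1_plus_m1 by (simp_all add: n1_of_eq)
  have inner: "(\<Sum>q\<in>{q \<in> Poly_Mapping.keys (Delta_plus y). length (fst q) = r - ?k}.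
      Poly_Mapping.single (shE ?g1 a (fst q), shE ?g2 b (snd q)) (e * Poly_Mapping.lookup (Delta_plus y) q)) =
    (\<Sum>t\<in>Poly_Mapping.keys y. Poly_Mapping.single
      (shE ?g1 a (stdw (take (r - ?k) t)), shE ?g2 b (stdw (drop (r - ?k) t))) (e * Poly_Mapping.lookup y t))"
    for a b and e :: 'k
    using sum_Delta_plus_component[OF y k(2),
        where F = "\<lambda>q c. Poly_Mapping.single (shE ?g1 a (fst q), shE ?g2 b (snd q)) (e * c)"]
    by (simp add: additive_def single_add distrib_left)
  have "(\<Sum>p\<in>{p \<in> Poly_Mapping.keys (Delta_plus x). length (fst p) = ?k}.
      \<Sum>t\<in>Poly_Mapping.keys y. Poly_Mapping.single
        (shE ?g1 (fst p) (stdw (take (r - ?k) t)), shE ?g2 (snd p) (stdw (drop (r - ?k) t)))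
        (Poly_Mapping.lookup (Delta_plus x) p * Poly_Mapping.lookup y t)) =
    (\<Sum>s\<in>Poly_Mapping.keys x. \<Sum>t\<in>Poly_Mapping.keys y.
      Poly_Mapping.single (compat_term g n m r s t) (Poly_Mapping.lookup x s * Poly_Mapping.lookup y t))"
    by (subst sum_Delta_plus_component[OF x k(1)])
      (simp_all add: compat_term_def additive_sum additive_single_mult)
  then show "(\<Sum>(a, b)\<in>{p \<in> Poly_Mapping.keys (Delta_plus x). length (fst p) = ?k}.
      \<Sum>(c, d)\<in>{p \<in> Poly_Mapping.keys (Delta_plus y). length (fst p) = r - ?k}.
        Poly_Mapping.single (shE ?g1 a c, shE ?g2 b d)
          (Poly_Mapping.lookup (Delta_plus x) (a, b) * Poly_Mapping.lookup (Delta_plus y) (c, d))) =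
    (\<Sum>s\<in>Poly_Mapping.keys x. \<Sum>t\<in>Poly_Mapping.keys y.
      Poly_Mapping.single (compat_term g n m r s t) (Poly_Mapping.lookup x s * Poly_Mapping.lookup y t))"
    by (simp add: split_def inner)
qed

lemma DeltaMR_shprod:
  fixes x y :: "word \<Rightarrow>\<^sub>0 'k::field"
  assumes x: "inA n x" and y: "inA m y" and g: "g \<in> Sh2 n m"
  shows "DeltaMR (shprod g x y) = compat_rhs g n m x y"
proof -
  let ?X = "Poly_Mapping.keys x" and ?Y = "Poly_Mapping.keys y"
  let ?x = "Poly_Mapping.lookup x" and ?y = "Poly_Mapping.lookup y"
  have "DeltaMR z = lin_ext (\<lambda>w c. \<Sum>r\<in>{1..<length w}. Poly_Mapping.single (std_cut w r) c) z"
    for z :: "word \<Rightarrow>\<^sub>0 'k"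
    by (simp add: DeltaMR_def lin_ext_def)
  moreover have "length g = n + m"
    using g by (simp add: Sh2_iff_filter is_perm_length)
  ultimately have "DeltaMR (shprod g x y) = (\<Sum>s\<in>?X. \<Sum>t\<in>?Y. \<Sum>r\<in>{1..<n + m}.
      Poly_Mapping.single (std_cut (compw (crossw s t) g) r) (?x s * ?y t))"
    by (simp add: shprod_def lin_ext_sum lin_ext_single additive_sum additive_single)
  also have "\<dots> = (\<Sum>s\<in>?X. \<Sum>t\<in>?Y. \<Sum>r\<in>{1..<n + m}.
      Poly_Mapping.single (compat_term g n m r s t) (?x s * ?y t))"
    using x y by (intro sum.cong refl) (simp add: inA_def std_cut_shuffle_product[OF g])
  also have "\<dots> = (\<Sum>s\<in>?X. \<Sum>r\<in>{1..<n + m}. \<Sum>t\<in>?Y.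
      Poly_Mapping.single (compat_term g n m r s t) (?x s * ?y t))"
    by (rule sum.cong[OF refl]) (rule sum.swap)
  also have "\<dots> = (\<Sum>r\<in>{1..<n + m}. \<Sum>s\<in>?X. \<Sum>t\<in>?Y.
      Poly_Mapping.single (compat_term g n m r s t) (?x s * ?y t))"
    by (rule sum.swap)
  also have "\<dots> = compat_rhs g n m x y"
    by (rule compat_rhs_eq[OF x y g, symmetric])
  finally show ?thesis .
qed

theorem mainTheorem7:
  fixes K_type :: "'k::field itself"
  shows
  \<comment> \<open>the products are well-defined maps A_n \<otimes> A_m \<rightarrow> A_(n+m)\<close>
  "(\<forall>n m g (x :: word \<Rightarrow>\<^sub>0 'k) y. inA n x \<longrightarrow> inA m y \<longrightarrow> g \<in> Sh2 n m
        \<longrightarrow> inA (n + m) (shprod g x y))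
   \<comment> \<open>shuffle algebra associativity\<close>
   \<and> (\<forall>n m r (x :: word \<Rightarrow>\<^sub>0 'k) y z g d s l.
        inA n x \<longrightarrow> inA m y \<longrightarrow> inA r z \<longrightarrow>
        g \<in> Sh2 n (m + r) \<longrightarrow> d \<in> Sh2 m r \<longrightarrow> s \<in> Sh2 n m \<longrightarrow> l \<in> Sh2 (n + m) r \<longrightarrow>
        compw (crossw (idp n) d) g = compw (crossw s (idp r)) l \<longrightarrow>
        shprod g x (shprod d y z) = shprod l (shprod s x y) z)
   \<comment> \<open>grading of the coproduct\<close>
   \<and> (\<forall>n (x :: word \<Rightarrow>\<^sub>0 'k). inA n x \<longrightarrow>
        (\<forall>(u, v)\<in>Poly_Mapping.keys (DeltaMR x). \<exists>i. 1 \<le> i \<and> i \<le> n - 1 \<and> is_perm i u \<and> is_perm (n - i) v))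
   \<comment> \<open>coassociativity\<close>
   \<and> (\<forall>x :: word \<Rightarrow>\<^sub>0 'k. inAll x \<longrightarrow> Delta_id (DeltaMR x) = id_Delta (DeltaMR x))
   \<comment> \<open>compatibility of coproduct and products\<close>
   \<and> (\<forall>n m g (x :: word \<Rightarrow>\<^sub>0 'k) y. inA n x \<longrightarrow> inA m y \<longrightarrow> g \<in> Sh2 n m \<longrightarrow>
        DeltaMR (shprod g x y) = compat_rhs g n m x y)"
proof (intro conjI allI impI)
  show "inA (n + m) (shprod g x y)" if "inA n x" "inA m y" "g \<in> Sh2 n m"
    for n m g and x y :: "word \<Rightarrow>\<^sub>0 'k"
    using that by (rule inA_shprod)
  show "shprod g x (shprod d y z) = shprod l (shprod s x y) z"
    if "inA n x" "inA m y" "inA r z" "g \<in> Sh2 n (m + r)" "d \<in> Sh2 m r" "s \<in> Sh2 n m"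
      "l \<in> Sh2 (n + m) r" "compw (crossw (idp n) d) g = compw (crossw s (idp r)) l"
    for n m r g d s l and x y z :: "word \<Rightarrow>\<^sub>0 'k"
    using that by (rule shprod_assoc)
  show "\<forall>(u, v)\<in>Poly_Mapping.keys (DeltaMR x). \<exists>i. 1 \<le> i \<and> i \<le> n - 1 \<and> is_perm i u \<and> is_perm (n - i) v"
    if "inA n x" for n and x :: "word \<Rightarrow>\<^sub>0 'k"
    using that DeltaMR_graded by blast
  show "Delta_id (DeltaMR x) = id_Delta (DeltaMR x)" if "inAll x" for x :: "word \<Rightarrow>\<^sub>0 'k"
    using that by (rule DeltaMR_coassoc)
  show "DeltaMR (shprod g x y) = compat_rhs g n m x y" if "inA n x" "inA m y" "g \<in> Sh2 n m"
    for n m g and x y :: "word \<Rightarrow>\<^sub>0 'k"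
    using that by (rule DeltaMR_shprod)
qed

end
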